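(* Let $a,d\in\mathbb N$ and let $\chi\in M(d)_\mathbb{R}$ be strictly dominant with $\chi\in\mathbf{V}^a(1,d)$. Then there exist real numbers $c_{ij}$ ($1\le j<i\le d$) and $c_i$ ($1\le i\le d$) with \[ \chi=\sum_{1\le j<i\le d}c_{ij}(\beta_i-\beta_j)+\sum_{i=1}^dc_i\beta_i,\qquad 0\le c_{ij}\le\tfrac32,\quad -\tfrac{a+2}{2}\le c_i\le\tfrac a2. \]
   Context: $T(d)\subset GL(d)$ diagonal torus with character lattice $M(d)$ having coordinate characters $\beta_1,\dots,\beta_d$; $M(d)_\mathbb R=M(d)\otimes\mathbb R$. $\chi=\sum b_i\beta_i$ is strictly dominant if $b_1<\cdots<b_d$. $\mathbf{V}^a(1,d):=\frac32\,\mathrm{sum}[0,\beta_i-\beta_j]+\frac a2\,\mathrm{sum}[-\beta_k,\beta_k]+\mathrm{sum}[-\beta_k,0]$, Minkowski sums of segments over all $1\le i,j\le d$ and all $1\le k\le d$. *)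

theory Defs
  imports Complex_Main
begin

text \<open>Elements of M(d)_R are represented as coefficient functions nat => real;
  a vector is sum_k b k * beta_k with coordinates indexed 1..d.\<close>

type_synonym charvec = "nat \<Rightarrow> real"

definition beta :: "nat \<Rightarrow> charvec" where
  "beta i = (\<lambda>k. if k = i then 1 else 0)"

definition seg :: "charvec \<Rightarrow> charvec \<Rightarrow> charvec set" where
  "seg p q = {(\<lambda>k. (1 - t) * p k + t * q k) | t. 0 \<le> t \<and> t \<le> 1}"

definition vscale :: "real \<Rightarrow> charvec set \<Rightarrow> charvec set" where
  "vscale c S = (\<lambda>v k. c * v k) ` S"

definition vplus :: "charvec set \<Rightarrow> charvec set \<Rightarrow> charvec set" where
  "vplus A B = {(\<lambda>k. x k + y k) | x y. x \<in> A \<and> y \<in> B}"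

definition msum :: "'i set \<Rightarrow> ('i \<Rightarrow> charvec set) \<Rightarrow> charvec set" where
  "msum I S = {(\<lambda>k. \<Sum>i\<in>I. x i k) | x. \<forall>i\<in>I. x i \<in> S i}"

definition V :: "nat \<Rightarrow> nat \<Rightarrow> charvec set" where
  "V a d = vplus
     (vplus (vscale (3/2) (msum ({1..d} \<times> {1..d})
                (\<lambda>(i,j). seg (\<lambda>_. 0) (\<lambda>k. beta i k - beta j k))))
            (vscale (real a / 2) (msum {1..d} (\<lambda>k. seg (\<lambda>m. - beta k m) (beta k)))))
     (msum {1..d} (\<lambda>k. seg (\<lambda>m. - beta k m) (\<lambda>_. 0)))"

definition strictly_dominant :: "nat \<Rightarrow> charvec \<Rightarrow> bool" where
  "strictly_dominant d \<chi> \<longleftrightarrow> (\<forall>i j. 1 \<le> i \<and> i < j \<and> j \<le> d \<longrightarrow> \<chi> i < \<chi> j)"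

end

theory Submission
  imports Defs
begin

text \<open>Membership in \<open>V\<^sup>a(1,d)\<close> means \<open>\<chi> k = (\<Sum>j. y k j) + w k\<close> with \<open>y\<close> antisymmetric,
  \<open>y \<le> 3/2\<close> and \<open>-(a+2)/2 \<le> w k \<le> a/2\<close>. By antisymmetry the \<open>y\<close>-part of a sum of \<open>s\<close>
  coordinates is at most \<open>3/2 * s * (d - s)\<close>, which bounds the top and bottom partial sums of
  the sorted vector \<open>\<chi>\<close>. Clamping \<open>\<chi> k - t\<close> to \<open>[-(a+2)/2, a/2]\<close>, with \<open>t\<close> chosen by the
  intermediate value theorem, gives weights \<open>W\<close> such that \<open>r = \<chi> - W\<close> is sorted, sums to zero
  and has every sum of its top \<open>s\<close> coordinates at most \<open>3/2 * s * (d - s)\<close>. A fractional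
  version of Landau's theorem on score sequences then writes \<open>r\<close> as \<open>\<Sum>j<i. c i j * (\<beta>\<^sub>i - \<beta>\<^sub>j)\<close>
  with \<open>0 \<le> c i j \<le> 3/2\<close>: inductively, the coefficients \<open>c d j\<close> are obtained by clamping a
  common level \<open>h\<close> to \<open>[r j, r j + 3/2]\<close>. Both clamping steps preserve the partial-sum bound
  because \<open>s \<mapsto> s * (d - s)\<close> is concave.\<close>

lemma upward_closed_threshold:
  fixes lo hi :: nat
  assumes "lo \<le> hi"
    and up: "\<And>i j. lo < i \<Longrightarrow> i \<le> j \<Longrightarrow> j \<le> hi \<Longrightarrow> Q i \<Longrightarrow> Q j"
  obtains m where "lo \<le> m" "m \<le> hi" "\<And>k. lo < k \<Longrightarrow> k \<le> hi \<Longrightarrow> Q k \<longleftrightarrow> m < k"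
proof
  define N where "N = insert lo {k \<in> {lo<..hi}. \<not> Q k}"
  have N: "finite N" "lo \<in> N" "\<forall>k\<in>N. k \<le> hi" using assms(1) by (auto simp: N_def)
  have max: "Max N \<in> N" "Max N \<le> hi" using N by (auto intro: Max_in)
  show "lo \<le> Max N" "Max N \<le> hi" using N max by auto
  fix k assume k: "lo < k" "k \<le> hi"
  show "Q k \<longleftrightarrow> Max N < k"
  proof
    assume "Q k"
    show "Max N < k"
    proof (rule ccontr)
      assume "\<not> Max N < k"
      then have "Max N \<noteq> lo" using k by auto
      then have "\<not> Q (Max N)" "lo < Max N" using max(1) by (auto simp: N_def)
      then show False using up[OF k(1) _ _ \<open>Q k\<close>] \<open>\<not> Max N < k\<close> max by simp
    qed
  next
    assume "Max N < k"
    then show "Q k" using k N(1) Max_ge[OF N(1), of k] by (auto simp: N_def)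
  qed
qed

lemma sum_greaterThanAtMost_split:
  fixes f :: "nat \<Rightarrow> 'a::comm_monoid_add"
  assumes "l \<le> m" "m \<le> u"
  shows "sum f {l<..u} = sum f {l<..m} + sum f {m<..u}"
  using assms by (subst ivl_disj_un_two(6)[OF assms, symmetric], subst sum.union_disjoint) auto

lemma sum_atLeastAtMost_split:
  fixes f :: "nat \<Rightarrow> 'a::comm_monoid_add"
  assumes "m \<le> u"
  shows "sum f {1..u} = sum f {1..m} + sum f {m<..u}"
proof -
  have "{1..u} = {1..m} \<union> {m<..u}" using assms by auto
  then show ?thesis by (metis sum.union_disjoint finite_atLeastAtMost finite_greaterThanAtMost ivl_disj_int_two(8))
qed

lemma sum_top_max_eq:
  fixes lo :: "nat \<Rightarrow> real"
  assumes mono: "mono_on {1..n} lo" and "s \<le> n"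
  obtains p where "p \<le> s"
    "(\<Sum>k\<in>{n-s<..n}. max (lo k) t) = (\<Sum>k\<in>{n-p<..n}. lo k) + real (s - p) * t"
proof -
  have up: "t \<le> lo j" if "n - s < i" "i \<le> j" "j \<le> n" "t \<le> lo i" for i j
    using mono_onD[OF mono, of i j] that by auto
  obtain m where m: "n - s \<le> m" "m \<le> n"
    and above: "\<And>k. n - s < k \<Longrightarrow> k \<le> n \<Longrightarrow> t \<le> lo k \<longleftrightarrow> m < k"
    by (rule upward_closed_threshold[of "n - s" n "\<lambda>k. t \<le> lo k", OF _ up]) auto
  have "(\<Sum>k\<in>{n-s<..n}. max (lo k) t)
      = (\<Sum>k\<in>{n-s<..m}. max (lo k) t) + (\<Sum>k\<in>{m<..n}. max (lo k) t)"
    using m by (rule sum_greaterThanAtMost_split)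
  also have "(\<Sum>k\<in>{n-s<..m}. max (lo k) t) = (\<Sum>k\<in>{n-s<..m}. t)"
    using above m by (intro sum.cong) (auto simp: not_le[symmetric])
  also have "(\<Sum>k\<in>{m<..n}. max (lo k) t) = (\<Sum>k\<in>{m<..n}. lo k)"
    using above m by (intro sum.cong) auto
  finally show ?thesis
    using m \<open>s \<le> n\<close> by (intro that[of "n - m"]) (auto simp: add.commute)
qed

lemma sum_bottom_min_eq:
  fixes hi :: "nat \<Rightarrow> real"
  assumes mono: "mono_on {1..m} hi"
  obtains q where "q \<le> m"
    "(\<Sum>k\<in>{1..m}. min (hi k) t) = (\<Sum>k\<in>{1..q}. hi k) + real (m - q) * t"
proof -
  have up: "t < hi j" if "0 < i" "i \<le> j" "j \<le> m" "t < hi i" for i j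
    using mono_onD[OF mono, of i j] that by auto
  obtain q where q: "q \<le> m"
    and above: "\<And>k. 0 < k \<Longrightarrow> k \<le> m \<Longrightarrow> t < hi k \<longleftrightarrow> q < k"
    by (rule upward_closed_threshold[of 0 m "\<lambda>k. t < hi k", OF _ up]) auto
  have "(\<Sum>k\<in>{1..m}. min (hi k) t)
      = (\<Sum>k\<in>{1..q}. min (hi k) t) + (\<Sum>k\<in>{q<..m}. min (hi k) t)"
    using q by (rule sum_atLeastAtMost_split)
  also have "(\<Sum>k\<in>{1..q}. min (hi k) t) = (\<Sum>k\<in>{1..q}. hi k)"
    using above q by (intro sum.cong) (auto simp: not_less[symmetric])
  also have "(\<Sum>k\<in>{q<..m}. min (hi k) t) = (\<Sum>k\<in>{q<..m}. t)"
    using above q by (intro sum.cong) auto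
  finally show ?thesis using q by (intro that) auto
qed

lemma parabola_interpolation:
  fixes T t \<kappa> :: real and p q s d :: nat
  assumes "p \<le> s" "s + q \<le> d" "0 \<le> \<kappa>"
    and upper: "T \<le> \<kappa> * p * (real d - real p) + real (s - p) * t"
    and lower: "T \<le> \<kappa> * q * (real d - real q) - real (d - s - q) * t"
  shows "T \<le> \<kappa> * s * (real d - real s)"
proof -
  define \<alpha> where "\<alpha> = real (d - s - q)"
  define \<beta> where "\<beta> = real (s - p)"
  have ab: "0 \<le> \<alpha>" "0 \<le> \<beta>" by (simp_all add: \<alpha>_def \<beta>_def)
  have s: "real s = p + \<beta>" and d: "real d = p + \<beta> + q + \<alpha>"
    using assms(1,2) by (simp_all add: \<alpha>_def \<beta>_def of_nat_diff)
  have "(\<alpha> + \<beta>) * T \<le> \<alpha> * (\<kappa> * p * (real d - real p) + \<beta> * t) + \<beta> * (\<kappa> * q * (real d - real q) - \<alpha> * t)"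
    using upper lower ab unfolding \<alpha>_def[symmetric] \<beta>_def[symmetric] distrib_right
    by (intro add_mono mult_left_mono) auto
  also have "\<dots> = (\<alpha> + \<beta>) * (\<kappa> * s * (real d - real s)) - \<kappa> * \<alpha> * \<beta> * (\<alpha> + \<beta>)"
    unfolding s d by (simp add: algebra_simps)
  also have "\<dots> \<le> (\<alpha> + \<beta>) * (\<kappa> * s * (real d - real s))"
    using ab assms(3) by simp
  finally have "(\<alpha> + \<beta>) * T \<le> (\<alpha> + \<beta>) * (\<kappa> * s * (real d - real s))" .
  moreover have "T \<le> \<kappa> * s * (real d - real s)" if "\<alpha> + \<beta> = 0"
    using that ab upper s d by (simp add: add_nonneg_eq_0_iff)
  ultimately show ?thesis using ab by (cases "\<alpha> + \<beta> = 0") simp_all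
qed

text \<open>Landau's condition on score sequences of tournaments, with edge weights in \<open>[0, \<kappa>]\<close>.\<close>

definition landau_bounded :: "real \<Rightarrow> nat \<Rightarrow> (nat \<Rightarrow> real) \<Rightarrow> bool" where
  "landau_bounded \<kappa> n r \<longleftrightarrow> (\<forall>s\<le>n. (\<Sum>k\<in>{n-s<..n}. r k) \<le> \<kappa> * s * (real n - real s))"

lemma mono_on_median:
  fixes lo hi :: "'a::order \<Rightarrow> real"
  assumes "mono_on A lo" "mono_on A hi"
  shows "mono_on A (\<lambda>k. max (lo k) (min (hi k) t))"
proof (rule mono_onI)
  fix r s assume "r \<in> A" "s \<in> A" "r \<le> s"
  then have "lo r \<le> lo s" "hi r \<le> hi s" using assms by (auto dest: mono_onD)
  then show "max (lo r) (min (hi r) t) \<le> max (lo s) (min (hi s) t)"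
    by (auto simp: max_def min_def)
qed

lemma landau_bounded_median:
  fixes lo hi :: "nat \<Rightarrow> real" and t \<kappa> :: real
  defines "m \<equiv> \<lambda>k. max (lo k) (min (hi k) t)"
  assumes "0 \<le> \<kappa>" "mono_on {1..n} lo" "mono_on {1..n} hi"
    and lo_top: "\<And>p. p \<le> n \<Longrightarrow> (\<Sum>k\<in>{n-p<..n}. lo k) \<le> \<kappa> * p * (real n - real p)"
    and hi_bottom: "\<And>q. q \<le> n \<Longrightarrow> (\<Sum>k\<in>{1..n}. m k) - (\<Sum>k\<in>{1..q}. hi k) \<le> \<kappa> * q * (real n - real q)"
  shows "landau_bounded \<kappa> n m"
  unfolding landau_bounded_def
proof (intro allI impI)
  fix s assume "s \<le> n"
  define T where "T = (\<Sum>k\<in>{n-s<..n}. m k)"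
  obtain p where p: "p \<le> s"
    and top: "(\<Sum>k\<in>{n-s<..n}. max (lo k) t) = (\<Sum>k\<in>{n-p<..n}. lo k) + real (s - p) * t"
    using sum_top_max_eq[OF assms(3) \<open>s \<le> n\<close>] .
  have "T \<le> (\<Sum>k\<in>{n-s<..n}. max (lo k) t)"
    unfolding T_def m_def by (intro sum_mono) auto
  then have upper: "T \<le> \<kappa> * p * (real n - real p) + real (s - p) * t"
    using top lo_top[of p] p \<open>s \<le> n\<close> by linarith
  have "mono_on {1..n - s} hi"
    using assms(4) by (rule mono_on_subset) auto
  then obtain q where q: "q \<le> n - s"
    and bottom: "(\<Sum>k\<in>{1..n-s}. min (hi k) t) = (\<Sum>k\<in>{1..q}. hi k) + real (n - s - q) * t"
    by (rule sum_bottom_min_eq)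
  have "(\<Sum>k\<in>{1..n-s}. min (hi k) t) \<le> (\<Sum>k\<in>{1..n-s}. m k)"
    unfolding m_def by (intro sum_mono) auto
  moreover have "(\<Sum>k\<in>{1..n}. m k) = (\<Sum>k\<in>{1..n-s}. m k) + T"
    unfolding T_def by (rule sum_atLeastAtMost_split) simp
  ultimately have lower: "T \<le> \<kappa> * q * (real n - real q) - real (n - s - q) * t"
    using bottom hi_bottom[of q] q by linarith
  have "s + q \<le> n" using q \<open>s \<le> n\<close> by simp
  from parabola_interpolation[OF p this assms(2) upper lower]
  show "T \<le> \<kappa> * s * (real n - real s)" .
qed

lemma median_sum_attains:
  fixes lo hi :: "'a \<Rightarrow> real"
  assumes "finite A" "\<And>k. k \<in> A \<Longrightarrow> lo k \<le> hi k"
    and "(\<Sum>k\<in>A. lo k) \<le> z" "z \<le> (\<Sum>k\<in>A. hi k)"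
  obtains t where "(\<Sum>k\<in>A. max (lo k) (min (hi k) t)) = z"
proof -
  define g where "g = (\<lambda>t. \<Sum>k\<in>A. max (lo k) (min (hi k) t))"
  define M where "M = (\<Sum>k\<in>A. \<bar>lo k\<bar> + \<bar>hi k\<bar>)"
  have bound: "\<bar>lo k\<bar> \<le> M" "\<bar>hi k\<bar> \<le> M" if "k \<in> A" for k
    using member_le_sum[of k A "\<lambda>k. \<bar>lo k\<bar> + \<bar>hi k\<bar>"] that assms(1)
    by (auto simp: M_def)
  have "max (lo k) (min (hi k) (- M)) = lo k" "max (lo k) (min (hi k) M) = hi k" if "k \<in> A" for k
    using bound[OF that] assms(2)[OF that] by (auto simp: abs_le_iff max_def min_def)
  then have "g (- M) = (\<Sum>k\<in>A. lo k)" "g M = (\<Sum>k\<in>A. hi k)"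
    unfolding g_def by (auto intro: sum.cong)
  moreover have "0 \<le> M" unfolding M_def by (simp add: sum_nonneg)
  moreover have "continuous_on {- M..M} g" unfolding g_def by (intro continuous_intros)
  ultimately obtain t where "g t = z"
    using IVT'[of g "- M" z M] assms(3,4) by auto
  then show ?thesis unfolding g_def by (rule that)
qed

lemma exists_weight_shift:
  fixes b :: "nat \<Rightarrow> real" and L U \<kappa> :: real
  assumes "L \<le> U" "0 \<le> \<kappa>" "mono_on {1..d} b"
    and top: "\<And>p. p \<le> d \<Longrightarrow> (\<Sum>k\<in>{d-p<..d}. b k) \<le> p * U + \<kappa> * p * (real d - real p)"
    and bottom: "\<And>q. q \<le> d \<Longrightarrow> q * L - \<kappa> * q * (real d - real q) \<le> (\<Sum>k\<in>{1..q}. b k)"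
  obtains w where "\<And>k. L \<le> w k \<and> w k \<le> U" "mono_on {1..d} (\<lambda>k. b k - w k)"
    "(\<Sum>k\<in>{1..d}. b k - w k) = 0" "landau_bounded \<kappa> d (\<lambda>k. b k - w k)"
proof -
  have "{d-d<..d} = {1..d}" by auto
  then have sums: "(\<Sum>k\<in>{1..d}. b k - U) \<le> 0" "0 \<le> (\<Sum>k\<in>{1..d}. b k - L)"
    using top[of d] bottom[of d] by (simp_all add: sum_subtractf)
  obtain t where t: "(\<Sum>k\<in>{1..d}. max (b k - U) (min (b k - L) t)) = 0"
    by (rule median_sum_attains[of "{1..d}" "\<lambda>k. b k - U" "\<lambda>k. b k - L" 0])
      (use sums \<open>L \<le> U\<close> in auto)
  define w where "w k = b k - max (b k - U) (min (b k - L) t)" for k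
  have shifted: "(\<lambda>k. b k - w k) = (\<lambda>k. max (b k - U) (min (b k - L) t))"
    by (simp add: w_def)
  have mono: "mono_on {1..d} (\<lambda>k. b k - U)" "mono_on {1..d} (\<lambda>k. b k - L)"
    using \<open>mono_on {1..d} b\<close> by (auto simp: mono_on_def)
  show ?thesis
  proof
    show "L \<le> w k \<and> w k \<le> U" for k
      using \<open>L \<le> U\<close> by (auto simp: w_def)
    show "mono_on {1..d} (\<lambda>k. b k - w k)"
      unfolding shifted using mono by (rule mono_on_median)
    show "(\<Sum>k\<in>{1..d}. b k - w k) = 0"
      using t by (simp add: w_def)
    show "landau_bounded \<kappa> d (\<lambda>k. b k - w k)"
      unfolding shifted
    proof (rule landau_bounded_median[OF \<open>0 \<le> \<kappa>\<close> mono])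
      show "(\<Sum>k\<in>{d-p<..d}. b k - U) \<le> \<kappa> * p * (real d - real p)" if "p \<le> d" for p
        using top[OF that] that by (simp add: sum_subtractf)
      show "(\<Sum>k\<in>{1..d}. max (b k - U) (min (b k - L) t)) - (\<Sum>k\<in>{1..q}. b k - L)
          \<le> \<kappa> * q * (real d - real q)" if "q \<le> d" for q
        using bottom[OF that] t that by (simp add: sum_subtractf of_nat_diff)
    qed
  qed
qed

lemma landau_bounded_butlast:
  fixes r :: "nat \<Rightarrow> real"
  assumes mono: "mono_on {1..Suc n} r" and "landau_bounded \<kappa> (Suc n) r"
  shows "landau_bounded \<kappa> n r"
  unfolding landau_bounded_def
proof (intro allI impI)
  fix p assume "p \<le> n"
  define A where "A = (\<Sum>k\<in>{n-p<..n}. r k)"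
  have "A \<le> (\<Sum>k\<in>{n-p<..n}. r (Suc n))"
    unfolding A_def by (intro sum_mono mono_onD[OF mono]) auto
  then have A_le: "A \<le> p * r (Suc n)" using \<open>p \<le> n\<close> by simp
  have "(\<Sum>k\<in>{n-p<..Suc n}. r k) = A + (\<Sum>k\<in>{n<..Suc n}. r k)"
    unfolding A_def by (rule sum_greaterThanAtMost_split) auto
  moreover have "{n<..Suc n} = {Suc n}" by auto
  moreover have "(\<Sum>k\<in>{Suc n - Suc p<..Suc n}. r k) \<le> \<kappa> * Suc p * (real (Suc n) - real (Suc p))"
    using assms(2)[unfolded landau_bounded_def, rule_format, of "Suc p"] \<open>p \<le> n\<close> by simp
  ultimately have sum_le: "A + r (Suc n) \<le> \<kappa> * (p + 1) * (real n - real p)" by simp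
  have "(p + 1) * A \<le> p * (A + r (Suc n))"
    using A_le by (simp add: algebra_simps)
  also have "\<dots> \<le> p * (\<kappa> * (p + 1) * (real n - real p))"
    using sum_le by (rule mult_left_mono) simp
  finally have "(p + 1) * A \<le> (p + 1) * (\<kappa> * p * (real n - real p))"
    by (simp add: algebra_simps)
  then show "A \<le> \<kappa> * p * (real n - real p)"
    by (rule mult_left_le_imp_le) simp
qed

lemma landau_bounded_bottom:
  fixes r :: "nat \<Rightarrow> real"
  assumes "(\<Sum>k\<in>{1..n}. r k) = 0" "landau_bounded \<kappa> n r" "q \<le> n"
  shows "- (\<Sum>k\<in>{1..q}. r k) \<le> \<kappa> * q * (real n - real q)"
proof -
  have "(\<Sum>k\<in>{1..n}. r k) = (\<Sum>k\<in>{1..q}. r k) + (\<Sum>k\<in>{q<..n}. r k)"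
    using \<open>q \<le> n\<close> by (rule sum_atLeastAtMost_split)
  moreover have "n - (n - q) = q" using \<open>q \<le> n\<close> by simp
  ultimately show ?thesis
    using assms(1,3) assms(2)[unfolded landau_bounded_def, rule_format, of "n - q"]
    by (simp add: of_nat_diff algebra_simps)
qed

lemma landau_step:
  fixes r :: "nat \<Rightarrow> real"
  assumes "0 \<le> \<kappa>" and mono: "mono_on {1..Suc n} r"
    and total: "(\<Sum>k\<in>{1..Suc n}. r k) = 0" and landau: "landau_bounded \<kappa> (Suc n) r"
  obtains z where "\<And>j. 0 \<le> z j \<and> z j \<le> \<kappa>" "(\<Sum>j\<in>{1..n}. z j) = r (Suc n)"
    "mono_on {1..n} (\<lambda>k. r k + z k)" "(\<Sum>k\<in>{1..n}. r k + z k) = 0"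
    "landau_bounded \<kappa> n (\<lambda>k. r k + z k)"
proof -
  have mono_n: "mono_on {1..n} r" using mono by (rule mono_on_subset) auto
  have total_n: "(\<Sum>k\<in>{1..n}. r k) + r (Suc n) = 0"
    using total by simp
  have "(\<Sum>k\<in>{1..Suc n}. r k) \<le> (\<Sum>k\<in>{1..Suc n}. r (Suc n))"
    by (intro sum_mono mono_onD[OF mono]) auto
  then have last_nonneg: "0 \<le> r (Suc n)" using total by (simp add: zero_le_mult_iff)
  have "{Suc n - 1<..Suc n} = {Suc n}" by auto
  then have last_le: "r (Suc n) \<le> \<kappa> * n"
    using landau[unfolded landau_bounded_def, rule_format, of 1] by simp
  have "(\<Sum>k\<in>{1..n}. r k) \<le> 0" "0 \<le> (\<Sum>k\<in>{1..n}. r k + \<kappa>)"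
    using total_n last_nonneg last_le by (simp_all add: sum.distrib mult.commute)
  then obtain h where h: "(\<Sum>k\<in>{1..n}. max (r k) (min (r k + \<kappa>) h)) = 0"
    using \<open>0 \<le> \<kappa>\<close> by (elim median_sum_attains[rotated 2]) auto
  define z where "z k = max (r k) (min (r k + \<kappa>) h) - r k" for k
  have shifted: "(\<lambda>k. r k + z k) = (\<lambda>k. max (r k) (min (r k + \<kappa>) h))"
    by (simp add: z_def)
  have mono_hi: "mono_on {1..n} (\<lambda>k. r k + \<kappa>)"
    using mono_n by (auto simp: mono_on_def)
  show ?thesis
  proof
    show "0 \<le> z j \<and> z j \<le> \<kappa>" for j
      using \<open>0 \<le> \<kappa>\<close> by (auto simp: z_def)
    show "(\<Sum>k\<in>{1..n}. r k + z k) = 0"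
      unfolding shifted by (rule h)
    then show "(\<Sum>j\<in>{1..n}. z j) = r (Suc n)"
      using total_n by (simp add: sum.distrib)
    show "mono_on {1..n} (\<lambda>k. r k + z k)"
      unfolding shifted using mono_n mono_hi by (rule mono_on_median)
    show "landau_bounded \<kappa> n (\<lambda>k. r k + z k)"
      unfolding shifted
    proof (rule landau_bounded_median[OF \<open>0 \<le> \<kappa>\<close> mono_n mono_hi])
      show "(\<Sum>k\<in>{n-p<..n}. r k) \<le> \<kappa> * p * (real n - real p)" if "p \<le> n" for p
        using landau_bounded_butlast[OF mono landau] that unfolding landau_bounded_def by blast
      show "(\<Sum>k\<in>{1..n}. max (r k) (min (r k + \<kappa>) h)) - (\<Sum>k\<in>{1..q}. r k + \<kappa>)
          \<le> \<kappa> * q * (real n - real q)" if "q \<le> n" for q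
        using landau_bounded_bottom[OF total landau, of q] that h
        by (simp add: sum.distrib of_nat_diff algebra_simps)
    qed
  qed
qed

definition root_coord :: "(nat \<Rightarrow> nat \<Rightarrow> real) \<Rightarrow> nat \<Rightarrow> nat \<Rightarrow> real" where
  "root_coord c n k = (\<Sum>j\<in>{1..<k}. c k j) - (\<Sum>i\<in>{Suc k..n}. c i k)"

lemma root_coord_extend:
  assumes "k \<le> n"
  shows "root_coord (c(Suc n := z)) (Suc n) k = root_coord c n k - z k"
  using assms by (simp add: root_coord_def)

lemma root_coord_extend_last:
  "root_coord (c(Suc n := z)) (Suc n) (Suc n) = (\<Sum>j\<in>{1..n}. z j)"
  by (simp add: root_coord_def atLeastLessThanSuc_atLeastAtMost)

theorem fractional_landau:
  fixes r :: "nat \<Rightarrow> real"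
  assumes "0 \<le> \<kappa>" "mono_on {1..n} r" "(\<Sum>k\<in>{1..n}. r k) = 0" "landau_bounded \<kappa> n r"
  shows "\<exists>c. (\<forall>k\<in>{1..n}. r k = root_coord c n k)
    \<and> (\<forall>i j. 1 \<le> j \<and> j < i \<and> i \<le> n \<longrightarrow> 0 \<le> c i j \<and> c i j \<le> \<kappa>)"
  using assms(2-4)
proof (induction n arbitrary: r)
  case 0
  then show ?case by auto
next
  case (Suc n)
  obtain z where z: "\<And>j. 0 \<le> z j \<and> z j \<le> \<kappa>" "(\<Sum>j\<in>{1..n}. z j) = r (Suc n)"
    and rest: "mono_on {1..n} (\<lambda>k. r k + z k)" "(\<Sum>k\<in>{1..n}. r k + z k) = 0"
      "landau_bounded \<kappa> n (\<lambda>k. r k + z k)"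
    using landau_step[OF assms(1) Suc.prems] by blast
  obtain c where c: "\<forall>k\<in>{1..n}. r k + z k = root_coord c n k"
    and c_bounds: "\<forall>i j. 1 \<le> j \<and> j < i \<and> i \<le> n \<longrightarrow> 0 \<le> c i j \<and> c i j \<le> \<kappa>"
    using Suc.IH[OF rest] by blast
  have "r k = root_coord (c(Suc n := z)) (Suc n) k" if k: "k \<in> {1..Suc n}" for k
  proof (cases "k = Suc n")
    case True
    then show ?thesis using root_coord_extend_last z(2) by simp
  next
    case False
    then have "k \<in> {1..n}" using k by auto
    then have "r k + z k = root_coord c n k" "k \<le> n" using c by auto
    then show ?thesis using root_coord_extend[of k n c z] by simp
  qed
  moreover have "\<forall>i j. 1 \<le> j \<and> j < i \<and> i \<le> Suc n \<longrightarrow> 0 \<le> (c(Suc n := z)) i j \<and> (c(Suc n := z)) i j \<le> \<kappa>"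
    using c_bounds z(1) by (auto simp: le_Suc_eq)
  ultimately show ?case by blast
qed

lemma sum_mult_beta:
  fixes g :: "nat \<Rightarrow> real"
  assumes "finite A"
  shows "(\<Sum>i\<in>A. g i * beta i k) = (if k \<in> A then g k else 0)"
proof -
  have "(\<Sum>i\<in>A. g i * beta i k) = (\<Sum>i\<in>A. if k = i then g i else 0)"
    by (rule sum.cong) (auto simp: beta_def)
  also have "\<dots> = (if k \<in> A then g k else 0)" using assms by (rule sum.delta')
  finally show ?thesis .
qed

lemma sum_pairs_beta_diff:
  fixes t :: "nat \<times> nat \<Rightarrow> real"
  assumes "finite A"
  shows "(\<Sum>ij\<in>A \<times> A. t ij * (beta (fst ij) k - beta (snd ij) k))
    = (if k \<in> A then (\<Sum>j\<in>A. t (k, j) - t (j, k)) else 0)"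
proof -
  have "(\<Sum>ij\<in>A \<times> A. t ij * (beta (fst ij) k - beta (snd ij) k))
      = (\<Sum>i\<in>A. \<Sum>j\<in>A. t (i, j) * beta i k) - (\<Sum>i\<in>A. \<Sum>j\<in>A. t (i, j) * beta j k)"
    by (simp add: sum.cartesian_product right_diff_distrib sum_subtractf case_prod_unfold)
  also have "(\<Sum>i\<in>A. \<Sum>j\<in>A. t (i, j) * beta i k) = (if k \<in> A then (\<Sum>j\<in>A. t (k, j)) else 0)"
    using assms by (simp add: sum_distrib_right[symmetric] sum_mult_beta)
  also have "(\<Sum>i\<in>A. \<Sum>j\<in>A. t (i, j) * beta j k) = (if k \<in> A then (\<Sum>i\<in>A. t (i, k)) else 0)"
    using assms by (simp add: sum_mult_beta)
  finally show ?thesis by (simp add: sum_subtractf)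
qed

lemma sum_positive_roots_beta:
  fixes c :: "nat \<Rightarrow> nat \<Rightarrow> real"
  shows "(\<Sum>i\<in>{1..d}. \<Sum>j\<in>{1..<i}. c i j * (beta i k - beta j k))
    = (if k \<in> {1..d} then root_coord c d k else 0)"
proof -
  have "(\<Sum>i\<in>{1..d}. \<Sum>j\<in>{1..<i}. c i j * (beta i k - beta j k))
      = (\<Sum>i\<in>{1..d}. (\<Sum>j\<in>{1..<i}. c i j) * beta i k)
        - (\<Sum>i\<in>{1..d}. \<Sum>j\<in>{1..<i}. c i j * beta j k)"
    by (simp add: right_diff_distrib sum_subtractf sum_distrib_right)
  also have "(\<Sum>i\<in>{1..d}. \<Sum>j\<in>{1..<i}. c i j * beta j k)
      = (\<Sum>i\<in>{1..d}. if k \<in> {1..<i} then c i k else 0)"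
    by (rule sum.cong) (simp_all add: sum_mult_beta)
  also have "\<dots> = (\<Sum>i\<in>{i\<in>{1..d}. k \<in> {1..<i}}. c i k)"
    by (rule sum.inter_filter[symmetric]) simp
  also have "{i\<in>{1..d}. k \<in> {1..<i}} = (if k \<in> {1..d} then {Suc k..d} else {})"
    by auto
  finally show ?thesis by (simp add: sum_mult_beta root_coord_def)
qed

lemma mem_vplus: "x \<in> vplus A B \<longleftrightarrow> (\<exists>u\<in>A. \<exists>v\<in>B. x = (\<lambda>k. u k + v k))"
  unfolding vplus_def by blast

lemma mem_vscale: "x \<in> vscale c S \<longleftrightarrow> (\<exists>v\<in>S. x = (\<lambda>k. c * v k))"
  unfolding vscale_def by blast

lemma mem_msum_seg:
  "x \<in> msum I (\<lambda>i. seg (p i) (q i)) \<longleftrightarrow>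
    (\<exists>t. (\<forall>i\<in>I. 0 \<le> t i \<and> t i \<le> 1) \<and> x = (\<lambda>k. \<Sum>i\<in>I. (1 - t i) * p i k + t i * q i k))"
proof
  assume "x \<in> msum I (\<lambda>i. seg (p i) (q i))"
  then obtain f where x: "x = (\<lambda>k. \<Sum>i\<in>I. f i k)" and f: "\<forall>i\<in>I. f i \<in> seg (p i) (q i)"
    unfolding msum_def by blast
  from f obtain t where "\<forall>i\<in>I. 0 \<le> t i \<and> t i \<le> 1 \<and> f i = (\<lambda>k. (1 - t i) * p i k + t i * q i k)"
    unfolding seg_def by (auto dest!: bchoice)
  with x show "\<exists>t. (\<forall>i\<in>I. 0 \<le> t i \<and> t i \<le> 1) \<and> x = (\<lambda>k. \<Sum>i\<in>I. (1 - t i) * p i k + t i * q i k)"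
    by (auto intro!: exI[of _ t] sum.cong)
next
  assume "\<exists>t. (\<forall>i\<in>I. 0 \<le> t i \<and> t i \<le> 1) \<and> x = (\<lambda>k. \<Sum>i\<in>I. (1 - t i) * p i k + t i * q i k)"
  then show "x \<in> msum I (\<lambda>i. seg (p i) (q i))"
    unfolding msum_def seg_def by fastforce
qed

lemma mem_V_decomposition:
  assumes "\<chi> \<in> V a d"
  obtains y w where
    "\<And>k j. k \<in> {1..d} \<Longrightarrow> j \<in> {1..d} \<Longrightarrow> y k j = - y j k"
    "\<And>k j. k \<in> {1..d} \<Longrightarrow> j \<in> {1..d} \<Longrightarrow> y k j \<le> 3/2"
    "\<And>k. k \<in> {1..d} \<Longrightarrow> - (real a + 2) / 2 \<le> w k \<and> w k \<le> real a / 2"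
    "\<And>k. k \<in> {1..d} \<Longrightarrow> \<chi> k = (\<Sum>j\<in>{1..d}. y k j) + w k"
    "\<And>k. k \<notin> {1..d} \<Longrightarrow> \<chi> k = 0"
proof -
  have pairs: "(\<lambda>(i, j). seg (\<lambda>_. 0) (\<lambda>k. beta i k - beta j k))
      = (\<lambda>ij. seg (\<lambda>_. 0) (\<lambda>k. beta (fst ij) k - beta (snd ij) k))"
    by (simp add: case_prod_unfold)
  from assms obtain t s u where
    t: "\<forall>ij\<in>{1..d} \<times> {1..d}. 0 \<le> t ij \<and> t ij \<le> 1" and
    s: "\<forall>i\<in>{1..d}. 0 \<le> s i \<and> s i \<le> 1" and
    u: "\<forall>i\<in>{1..d}. 0 \<le> u i \<and> u i \<le> 1" and
    \<chi>: "\<chi> = (\<lambda>k. 3/2 * (\<Sum>ij\<in>{1..d} \<times> {1..d}. (1 - t ij) * 0 + t ij * (beta (fst ij) k - beta (snd ij) k))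
        + real a / 2 * (\<Sum>i\<in>{1..d}. (1 - s i) * - beta i k + s i * beta i k)
        + (\<Sum>i\<in>{1..d}. (1 - u i) * - beta i k + u i * 0))"
    unfolding V_def pairs by (auto simp: mem_vplus mem_vscale mem_msum_seg)
  define y where "y k j = 3/2 * (t (k, j) - t (j, k))" for k j
  define w where "w k = real a / 2 * (2 * s k - 1) + (u k - 1)" for k
  have coord: "\<chi> k = (if k \<in> {1..d} then (\<Sum>j\<in>{1..d}. y k j) + w k else 0)" for k
  proof -
    have "(\<Sum>ij\<in>{1..d} \<times> {1..d}. (1 - t ij) * 0 + t ij * (beta (fst ij) k - beta (snd ij) k))
        = (if k \<in> {1..d} then (\<Sum>j\<in>{1..d}. t (k, j) - t (j, k)) else 0)"
      using sum_pairs_beta_diff[of "{1..d}" t k] by simp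
    moreover have "(\<Sum>i\<in>{1..d}. (1 - s i) * - beta i k + s i * beta i k)
        = (\<Sum>i\<in>{1..d}. (2 * s i - 1) * beta i k)"
      "(\<Sum>i\<in>{1..d}. (1 - u i) * - beta i k + u i * 0) = (\<Sum>i\<in>{1..d}. (u i - 1) * beta i k)"
      by (simp_all add: algebra_simps)
    moreover have "(\<Sum>j\<in>{1..d}. y k j) = 3/2 * (\<Sum>j\<in>{1..d}. t (k, j) - t (j, k))"
      unfolding y_def by (rule sum_distrib_left[symmetric])
    ultimately show ?thesis
      unfolding \<chi> w_def by (simp add: sum_mult_beta)
  qed
  have w_bounds: "- (real a + 2) / 2 \<le> w k \<and> w k \<le> real a / 2" if "k \<in> {1..d}" for k
  proof -
    have "0 \<le> s k" "s k \<le> 1" "0 \<le> u k" "u k \<le> 1" using s u that by auto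
    then have "- (real a / 2) \<le> real a / 2 * (2 * s k - 1) \<and> real a / 2 * (2 * s k - 1) \<le> real a / 2"
      by (auto simp: algebra_simps mult_left_le mult_left_mono)
    then show ?thesis using \<open>0 \<le> u k\<close> \<open>u k \<le> 1\<close> by (simp add: w_def)
  qed
  have y_antisym: "y k j = - y j k" and y_le: "y k j \<le> 3/2" if "k \<in> {1..d}" "j \<in> {1..d}" for k j
  proof -
    have "t (k, j) \<le> 1" "0 \<le> t (j, k)" using t that by auto
    then show "y k j = - y j k" "y k j \<le> 3/2" by (simp_all add: y_def algebra_simps)
  qed
  show ?thesis
    by (rule that[of y w]) (fact y_antisym y_le w_bounds | auto simp: coord)+
qed

lemma antisym_sum_le_cut:
  fixes y :: "'a \<Rightarrow> 'a \<Rightarrow> real"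
  assumes "finite A" "S \<subseteq> A"
    and antisym: "\<And>k j. k \<in> A \<Longrightarrow> j \<in> A \<Longrightarrow> y k j = - y j k"
    and bound: "\<And>k j. k \<in> A \<Longrightarrow> j \<in> A \<Longrightarrow> y k j \<le> \<kappa>"
  shows "(\<Sum>k\<in>S. \<Sum>j\<in>A. y k j) \<le> \<kappa> * card S * card (A - S)"
proof -
  define X where "X = (\<Sum>k\<in>S. \<Sum>j\<in>S. y k j)"
  have "X = (\<Sum>j\<in>S. \<Sum>k\<in>S. y k j)" unfolding X_def by (rule sum.swap)
  also have "\<dots> = (\<Sum>j\<in>S. \<Sum>k\<in>S. - y j k)"
    using assms(2) by (intro sum.cong refl antisym) auto
  also have "\<dots> = - X" by (simp add: X_def sum_negf)
  finally have "X = 0" by simp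
  have "(\<Sum>k\<in>S. \<Sum>j\<in>A. y k j) = (\<Sum>k\<in>S. \<Sum>j\<in>A - S. y k j) + X"
    unfolding X_def using assms(1,2)
    by (simp add: sum.subset_diff[of S A] sum.distrib)
  also have "\<dots> \<le> (\<Sum>k\<in>S. \<Sum>j\<in>A - S. \<kappa>)"
    unfolding \<open>X = 0\<close> add_0_right using assms(2) by (intro sum_mono bound) auto
  also have "\<dots> = \<kappa> * card S * card (A - S)" by simp
  finally show ?thesis .
qed

lemma V_sum_bounds:
  assumes "\<chi> \<in> V a d" "S \<subseteq> {1..d}"
  shows "(\<Sum>k\<in>S. \<chi> k) \<le> card S * (real a / 2) + 3/2 * card S * (real d - card S)"
    and "card S * (- (real a + 2) / 2) - 3/2 * card S * (real d - card S) \<le> (\<Sum>k\<in>S. \<chi> k)"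
proof -
  obtain y w where antisym: "\<And>k j. k \<in> {1..d} \<Longrightarrow> j \<in> {1..d} \<Longrightarrow> y k j = - y j k"
    and y_le: "\<And>k j. k \<in> {1..d} \<Longrightarrow> j \<in> {1..d} \<Longrightarrow> y k j \<le> 3/2"
    and w: "\<And>k. k \<in> {1..d} \<Longrightarrow> - (real a + 2) / 2 \<le> w k \<and> w k \<le> real a / 2"
    and \<chi>: "\<And>k. k \<in> {1..d} \<Longrightarrow> \<chi> k = (\<Sum>j\<in>{1..d}. y k j) + w k"
    using mem_V_decomposition[OF assms(1)] by metis
  have "card S \<le> d" using card_mono[OF _ assms(2)] by simp
  then have card: "real (card ({1..d} - S)) = real d - card S"
    using assms(2) by (simp add: card_Diff_subset finite_subset of_nat_diff)
  have "(\<Sum>k\<in>S. \<chi> k) = (\<Sum>k\<in>S. (\<Sum>j\<in>{1..d}. y k j) + w k)"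
    using assms(2) by (intro sum.cong refl \<chi>) auto
  then have split: "(\<Sum>k\<in>S. \<chi> k) = (\<Sum>k\<in>S. \<Sum>j\<in>{1..d}. y k j) + (\<Sum>k\<in>S. w k)"
    by (simp add: sum.distrib)
  have "(\<Sum>k\<in>S. \<Sum>j\<in>{1..d}. y k j) \<le> 3/2 * card S * (real d - card S)"
    using antisym_sum_le_cut[of "{1..d}" S y "3/2", OF _ assms(2) antisym y_le] card by simp
  moreover have "(\<Sum>k\<in>S. w k) \<le> (\<Sum>k\<in>S. real a / 2)"
    using assms(2) w by (intro sum_mono) (meson subsetD)
  ultimately show "(\<Sum>k\<in>S. \<chi> k) \<le> card S * (real a / 2) + 3/2 * card S * (real d - card S)"
    using split by simp
  have "- y k j = - (- y j k)" "- y k j \<le> 3/2" if "k \<in> {1..d}" "j \<in> {1..d}" for k j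
    using y_le[OF that(2,1)] antisym[OF that(2,1)] by simp_all
  from antisym_sum_le_cut[OF _ assms(2), of "\<lambda>k j. - y k j", OF _ this]
  have "(\<Sum>k\<in>S. \<Sum>j\<in>{1..d}. - y k j) \<le> 3/2 * card S * (real d - card S)"
    using card by simp
  moreover have "(\<Sum>k\<in>S. - (real a + 2) / 2) \<le> (\<Sum>k\<in>S. w k)"
    using assms(2) w by (intro sum_mono) (meson subsetD)
  ultimately show "card S * (- (real a + 2) / 2) - 3/2 * card S * (real d - card S) \<le> (\<Sum>k\<in>S. \<chi> k)"
    using split by (simp add: sum_negf)
qed

lemma V_support:
  assumes "\<chi> \<in> V a d" "k \<notin> {1..d}"
  shows "\<chi> k = 0"
  using mem_V_decomposition[OF assms(1)] assms(2) by metis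

lemma eq_root_sum_plus_weights:
  assumes "\<forall>k\<in>{1..d}. \<chi> k - W k = root_coord c d k" "\<And>k. k \<notin> {1..d} \<Longrightarrow> \<chi> k = 0"
  shows "\<chi> = (\<lambda>k. (\<Sum>i\<in>{1..d}. \<Sum>j\<in>{1..<i}. c i j * (beta i k - beta j k))
                  + (\<Sum>i\<in>{1..d}. W i * beta i k))"
proof
  fix k
  show "\<chi> k = (\<Sum>i\<in>{1..d}. \<Sum>j\<in>{1..<i}. c i j * (beta i k - beta j k)) + (\<Sum>i\<in>{1..d}. W i * beta i k)"
  proof (cases "k \<in> {1..d}")
    case True
    then have "\<chi> k - W k = root_coord c d k" using assms(1) by blast
    then show ?thesis using True unfolding sum_positive_roots_beta by (simp add: sum_mult_beta)
  next
    case False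
    then show ?thesis using assms(2)[OF False] unfolding sum_positive_roots_beta by (auto simp: sum_mult_beta)
  qed
qed

theorem proposition3p3:
  fixes a d :: nat and \<chi> :: charvec
  assumes "strictly_dominant d \<chi>"
    and "\<chi> \<in> V a d"
  shows "\<exists>c :: nat \<Rightarrow> nat \<Rightarrow> real. \<exists>cc :: nat \<Rightarrow> real.
           \<chi> = (\<lambda>k. (\<Sum>i\<in>{1..d}. \<Sum>j\<in>{1..<i}. c i j * (beta i k - beta j k))
                    + (\<Sum>i\<in>{1..d}. cc i * beta i k))
         \<and> (\<forall>i j. 1 \<le> j \<and> j < i \<and> i \<le> d \<longrightarrow> 0 \<le> c i j \<and> c i j \<le> 3/2)
         \<and> (\<forall>i. 1 \<le> i \<and> i \<le> d \<longrightarrow> - (real a + 2) / 2 \<le> cc i \<and> cc i \<le> real a / 2)"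
proof -
  have mono: "mono_on {1..d} \<chi>"
    using assms(1) unfolding strictly_dominant_def by (auto intro!: mono_onI simp: le_less)
  have top: "(\<Sum>k\<in>{d-p<..d}. \<chi> k) \<le> p * (real a / 2) + 3/2 * p * (real d - real p)" if "p \<le> d" for p
    using V_sum_bounds(1)[OF assms(2), of "{d-p<..d}"] that by (simp add: subset_iff)
  have bottom: "q * (- (real a + 2) / 2) - 3/2 * q * (real d - real q) \<le> (\<Sum>k\<in>{1..q}. \<chi> k)" if "q \<le> d" for q
    using V_sum_bounds(2)[OF assms(2), of "{1..q}"] that by simp
  obtain W where W_bounds: "\<And>k. - (real a + 2) / 2 \<le> W k \<and> W k \<le> real a / 2"
    and shifted: "mono_on {1..d} (\<lambda>k. \<chi> k - W k)" "(\<Sum>k\<in>{1..d}. \<chi> k - W k) = 0"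
      "landau_bounded (3/2) d (\<lambda>k. \<chi> k - W k)"
    using exists_weight_shift[OF _ _ mono top bottom] by auto
  obtain c where c: "\<forall>k\<in>{1..d}. \<chi> k - W k = root_coord c d k"
    and c_bounds: "\<forall>i j. 1 \<le> j \<and> j < i \<and> i \<le> d \<longrightarrow> 0 \<le> c i j \<and> c i j \<le> 3/2"
    using fractional_landau[of "3/2" d, OF _ shifted] by auto
  show ?thesis
    using eq_root_sum_plus_weights[OF c V_support[OF assms(2)]] c_bounds W_bounds by blast
qed

end
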